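(* Let $(W_t)_{t\ge 0}$ be a standard one-dimensional Brownian motion with $W_0=0$ on a complete probability space $(\Omega,\mathscr{F},P)$ with a right-continuous filtration $(\mathscr{F}_t)_{t\ge0}$. For $x\in[0,1]$ define the stopping time $$\sigma(x):=\inf\Big\{t>0 \,\Big|\, \tfrac{x+t+W_t}{1+2t+2W_t}\notin[0,1]\Big\}\wedge\inf\{t>0\,|\,1+2t+2W_t=0\},$$ and for $t<\sigma(x)$ define $$u(x,t):=\frac{1-x+t+W_t}{1+2t+2W_t}.$$ Then, for almost all $\omega$ and all $(x,t)$ with $x\in[0,1]$ and $t<\sigma(x)$, $u$ solves the stochastic partial differential equation $$\mathrm{d} u=-(1-2u)\,u_x\,\mathrm{d} t-(1-2u)\,u_x\circ\mathrm{d} W_t,\qquad u(x,0)=1-x,$$ i.e. $u(x,t)=1-x-\int_0^t(1-2u(x,s))\,u_x(x,s)\,\mathrm{d}s-\int_0^t(1-2u(x,s))\,u_x(x,s)\circ\mathrm{d}W_s$, where $\circ\,\mathrm{d}W$ denotes the Stratonovich integral.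
   Context: This is a stochastically perturbed Lighthill–Whitham–Richards traffic model $u_t+(1-2u)u_x+(1-2u)u_x\circ \dot W_t=0$ with initial density $g(x)=1-x$ on $[0,1]$. Here $u_x$ denotes the partial derivative of $u$ with respect to the space variable $x$ (for fixed $t$ and $\omega$). *)

theory Defs
  imports "HOL-Probability.Probability"
begin

definition brownian_motion :: "'a measure \<Rightarrow> (real \<Rightarrow> 'a \<Rightarrow> real) \<Rightarrow> bool" where
  "brownian_motion M W \<longleftrightarrow>
     prob_space M \<and>
     (\<forall>t. W t \<in> borel_measurable M) \<and>
     (\<forall>\<omega>\<in>space M. W 0 \<omega> = 0) \<and>
     (\<forall>\<omega>\<in>space M. continuous_on {0..} (\<lambda>t. W t \<omega>)) \<and>
     (\<forall>s t. 0 \<le> s \<and> s < t \<longrightarrow>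
        distributed M lborel (\<lambda>\<omega>. W t \<omega> - W s \<omega>) (normal_density 0 (sqrt (t - s)))) \<and>
     (\<forall>ts :: real list. sorted ts \<and> (\<forall>r\<in>set ts. 0 \<le> r) \<longrightarrow>
        prob_space.indep_vars M (\<lambda>_. borel)
          (\<lambda>i \<omega>. W (ts ! Suc i) \<omega> - W (ts ! i) \<omega>) {..<length ts - 1})"

text \<open>The stopping time sigma(x); Inf of the empty set of ereals is infinity.\<close>
definition lwr_sigma :: "(real \<Rightarrow> 'a \<Rightarrow> real) \<Rightarrow> real \<Rightarrow> 'a \<Rightarrow> ereal" where
  "lwr_sigma W x \<omega> =
     min (Inf {ereal t | t. 0 < t \<and> (x + t + W t \<omega>) / (1 + 2 * t + 2 * W t \<omega>) \<notin> {0..1}})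
         (Inf {ereal t | t. 0 < t \<and> 1 + 2 * t + 2 * W t \<omega> = 0})"

definition lwr_u :: "(real \<Rightarrow> 'a \<Rightarrow> real) \<Rightarrow> real \<Rightarrow> real \<Rightarrow> 'a \<Rightarrow> real" where
  "lwr_u W x t \<omega> = (1 - x + t + W t \<omega>) / (1 + 2 * t + 2 * W t \<omega>)"

definition strat_sum :: "(real \<Rightarrow> 'a \<Rightarrow> real) \<Rightarrow> (real \<Rightarrow> 'a \<Rightarrow> real) \<Rightarrow> real \<Rightarrow> nat \<Rightarrow> 'a \<Rightarrow> real" where
  "strat_sum W H t n \<omega> =
     (\<Sum>k<n. (H (real k * t / real n) \<omega> + H (real (Suc k) * t / real n) \<omega>) / 2
             * (W (real (Suc k) * t / real n) \<omega> - W (real k * t / real n) \<omega>))"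

text \<open>I is the Stratonovich integral of H dW over [0,t] on the event A: the Stratonovich
  sums converge in probability to I on A (localised definition, as H need only be
  defined before a stopping time).\<close>
definition stratonovich_on ::
  "'a measure \<Rightarrow> (real \<Rightarrow> 'a \<Rightarrow> real) \<Rightarrow> (real \<Rightarrow> 'a \<Rightarrow> real) \<Rightarrow> real \<Rightarrow> 'a set \<Rightarrow> ('a \<Rightarrow> real) \<Rightarrow> bool" where
  "stratonovich_on M W H t A I \<longleftrightarrow>
     (\<forall>\<epsilon>>0.
        (\<forall>n. {\<omega> \<in> space M. \<omega> \<in> A \<and> \<epsilon> < \<bar>strat_sum W H t n \<omega> - I \<omega>\<bar>} \<in> sets M) \<and>
        ((\<lambda>n. measure M {\<omega> \<in> space M. \<omega> \<in> A \<and> \<epsilon> < \<bar>strat_sum W H t n \<omega> - I \<omega>\<bar>})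
           \<longlonglongrightarrow> 0))"

end

theory Submission
  imports Defs
begin

(* With D = 1 + 2t + 2W_t the solution is u = 1/2 + (1/2 - x) / D, and the integrand
   (1 - 2u) u_x equals (1 - 2x) / D^2.  The trapezoidal rule for the integral of dD / D^2
   over [a, b] is exact up to the cubic term (b - a)^3 / (2 a^2 b^2).  On the uniform grid of
   mesh h = t/n, D has increments 2 (h + dW), so the Stratonovich sums telescope to
   u(x,0) - u(x,t) minus a trapezoidal Riemann sum of the dt-integral, up to an error of
   order n h^3 plus the cubic variation of W, whose expectation is of order sqrt h.  Hence
   the error vanishes in probability as long as D stays above a fixed positive level.
   Before sigma(x) the continuous path D is positive on [0, t], hence above some 1/(K+1),
   and localising on these events gives convergence in probability on {t < sigma(x)}. *)

section \<open>Trapezoidal sums\<close>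

lemma trapezoid_inverse_square:
  fixes a b :: real
  assumes "a \<noteq> 0" "b \<noteq> 0"
  shows "(1 / a^2 + 1 / b^2) / 2 * (b - a) = (1 / a - 1 / b) + (b - a)^3 / (2 * a^2 * b^2)"
  using assms by (simp add: field_simps power2_eq_square power3_eq_cube)

lemma trapezoid_error_le:
  fixes g :: "real \<Rightarrow> real"
  assumes "a \<le> b" and g: "continuous_on {a..b} g"
    and close: "\<And>s. s \<in> {a..b} \<Longrightarrow> \<bar>g s - g a\<bar> \<le> e \<and> \<bar>g s - g b\<bar> \<le> e"
  shows "\<bar>(g a + g b) / 2 * (b - a) - integral {a..b} g\<bar> \<le> e * (b - a)"
proof -
  have "g integrable_on {a..b}"
    using g by (rule integrable_continuous_interval)
  then have "integral {a..b} (\<lambda>s. ((g a - g s) + (g b - g s)) / 2)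
      = integral {a..b} (\<lambda>s. (g a + g b) / 2) - integral {a..b} g"
    by (subst integral_diff[symmetric]) (auto simp: field_simps)
  then have "(g a + g b) / 2 * (b - a) - integral {a..b} g
      = integral {a..b} (\<lambda>s. ((g a - g s) + (g b - g s)) / 2)"
    using \<open>a \<le> b\<close> by simp
  also have "\<bar>\<dots>\<bar> \<le> e * (b - a)"
  proof -
    have "norm (integral {a..b} (\<lambda>s. ((g a - g s) + (g b - g s)) / 2)) \<le> e * (b - a)"
    proof (rule integral_bound[OF \<open>a \<le> b\<close>])
      show "continuous_on {a..b} (\<lambda>s. ((g a - g s) + (g b - g s)) / 2)"
        using g by (intro continuous_intros) auto
      show "norm ((g a - g s + (g b - g s)) / 2) \<le> e" if "s \<in> {a..b}" for s
        using close[OF that] by (simp add: abs_minus_commute) linarith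
    qed
    then show ?thesis by simp
  qed
  finally show ?thesis .
qed

definition grid :: "real \<Rightarrow> nat \<Rightarrow> nat \<Rightarrow> real" where
  "grid t n k = real k * t / real n"

definition trapezoid_sum :: "(real \<Rightarrow> real) \<Rightarrow> real \<Rightarrow> nat \<Rightarrow> real" where
  "trapezoid_sum g t n = (\<Sum>k<n. (g (grid t n k) + g (grid t n (Suc k))) / 2 * (t / real n))"

lemma grid_0 [simp]: "grid t n 0 = 0"
  by (simp add: grid_def)

lemma grid_last [simp]: "0 < n \<Longrightarrow> grid t n n = t"
  by (simp add: grid_def)

lemma grid_Suc: "grid t n (Suc k) = grid t n k + t / real n"
  by (simp add: grid_def add_divide_distrib distrib_right)

lemma grid_mem: "0 \<le> t \<Longrightarrow> k \<le> n \<Longrightarrow> grid t n k \<in> {0..t}"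
  by (cases "n = 0") (auto simp: grid_def field_simps intro: mult_left_mono)

lemma integral_eq_sum_grid:
  fixes g :: "real \<Rightarrow> real"
  assumes "0 \<le> t" "0 < n" and g: "continuous_on {0..t} g"
  shows "integral {0..t} g = (\<Sum>k<n. integral {grid t n k..grid t n (Suc k)} g)"
proof -
  have "integral {0..grid t n (Suc k)} g = integral {0..grid t n k} g + integral {grid t n k..grid t n (Suc k)} g"
    if "k < n" for k
  proof -
    have "0 \<le> grid t n k" "grid t n k \<le> grid t n (Suc k)"
      using grid_mem[OF \<open>0 \<le> t\<close>, of k n] that \<open>0 \<le> t\<close> by (auto simp: grid_Suc)
    moreover have "g integrable_on {0..grid t n (Suc k)}"
      using grid_mem[OF \<open>0 \<le> t\<close>, of "Suc k" n] that
      by (intro integrable_continuous_interval continuous_on_subset[OF g]) auto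
    ultimately show ?thesis
      by (rule Henstock_Kurzweil_Integration.integral_combine[symmetric])
  qed
  then have "(\<Sum>k<n. integral {grid t n k..grid t n (Suc k)} g)
      = (\<Sum>k<n. integral {0..grid t n (Suc k)} g - integral {0..grid t n k} g)"
    by (intro sum.cong) auto
  also have "\<dots> = integral {0..t} g"
    using \<open>0 < n\<close> sum_lessThan_telescope[of "\<lambda>k. integral {0..grid t n k} g" n] by simp
  finally show ?thesis ..
qed

lemma trapezoid_sum_error_le:
  fixes g :: "real \<Rightarrow> real"
  assumes t: "0 \<le> t" and "0 < n" and g: "continuous_on {0..t} g"
    and close: "\<And>a b. a \<in> {0..t} \<Longrightarrow> b \<in> {0..t} \<Longrightarrow> \<bar>b - a\<bar> \<le> t / real n \<Longrightarrow> \<bar>g b - g a\<bar> \<le> e"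
  shows "\<bar>trapezoid_sum g t n - integral {0..t} g\<bar> \<le> e * t"
proof -
  have cell: "\<bar>(g (grid t n k) + g (grid t n (Suc k))) / 2 * (t / real n)
      - integral {grid t n k..grid t n (Suc k)} g\<bar> \<le> e * (t / real n)" if "k < n" for k
  proof -
    have sub: "{grid t n k..grid t n (Suc k)} \<subseteq> {0..t}"
      using grid_mem[OF t, of k n] grid_mem[OF t, of "Suc k" n] that by auto
    have "\<bar>g s - g a\<bar> \<le> e" if "s \<in> {grid t n k..grid t n (Suc k)}" "a \<in> {grid t n k, grid t n (Suc k)}" for s a
      using that sub by (intro close) (auto simp: grid_Suc)
    then show ?thesis
      using trapezoid_error_le[of "grid t n k" "grid t n (Suc k)" g e] continuous_on_subset[OF g sub]
      by (simp add: grid_Suc t)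
  qed
  have "\<bar>trapezoid_sum g t n - integral {0..t} g\<bar>
      = \<bar>\<Sum>k<n. (g (grid t n k) + g (grid t n (Suc k))) / 2 * (t / real n)
          - integral {grid t n k..grid t n (Suc k)} g\<bar>"
    by (simp add: trapezoid_sum_def integral_eq_sum_grid[OF t \<open>0 < n\<close> g] sum_subtractf)
  also have "\<dots> \<le> (\<Sum>k<n. e * (t / real n))"
    by (intro order_trans[OF sum_abs] sum_mono cell) simp
  also have "\<dots> = e * t"
    using \<open>0 < n\<close> by simp
  finally show ?thesis .
qed

lemma trapezoid_sum_tendsto_integral:
  fixes g :: "real \<Rightarrow> real"
  assumes t: "0 \<le> t" and g: "continuous_on {0..t} g"
  shows "(\<lambda>n. trapezoid_sum g t n) \<longlonglongrightarrow> integral {0..t} g"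
proof (rule LIMSEQ_I)
  fix r :: real assume "0 < r"
  define e where "e = r / (t + 1)"
  have "0 < e" "e * t < r"
    using \<open>0 < r\<close> t by (auto simp: e_def field_simps)
  obtain d where "0 < d" and d: "\<And>a b. a \<in> {0..t} \<Longrightarrow> b \<in> {0..t} \<Longrightarrow> dist b a < d \<Longrightarrow> dist (g b) (g a) < e"
    using compact_uniformly_continuous[OF g compact_Icc] \<open>0 < e\<close>
    unfolding uniformly_continuous_on_def by metis
  obtain N :: nat where N: "t / d < real N"
    using reals_Archimedean2 by blast
  have "norm (trapezoid_sum g t n - integral {0..t} g) < r" if "Suc N \<le> n" for n
  proof -
    have "0 < n"
      using that by simp
    have "t < d * real N"
      using N \<open>0 < d\<close> by (simp add: field_simps)
    also have "\<dots> \<le> d * real n"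
      using that \<open>0 < d\<close> by simp
    finally have "t / real n < d"
      using \<open>0 < n\<close> by (simp add: field_simps)
    then have "\<bar>trapezoid_sum g t n - integral {0..t} g\<bar> \<le> e * t"
      using d by (intro trapezoid_sum_error_le[OF t \<open>0 < n\<close> g]) (force simp: dist_real_def)
    then show ?thesis
      using \<open>e * t < r\<close> by simp
  qed
  then show "\<exists>N. \<forall>n\<ge>N. norm (trapezoid_sum g t n - integral {0..t} g) < r"
    by blast
qed

lemma ereal_less_Inf_image_iff: "ereal t < Inf (ereal ` S) \<longleftrightarrow> (\<exists>T>t. \<forall>s\<in>S. T \<le> s)"
proof
  assume "ereal t < Inf (ereal ` S)"
  then obtain T where "ereal t < ereal T" and T: "ereal T < Inf (ereal ` S)"
    using ereal_dense2 by blast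
  have "T \<le> s" if "s \<in> S" for s
  proof -
    have "Inf (ereal ` S) \<le> ereal s"
      using that by (intro Inf_lower) simp
    with T have "ereal T < ereal s"
      by (rule order.strict_trans2)
    then show ?thesis
      by simp
  qed
  then show "\<exists>T>t. \<forall>s\<in>S. T \<le> s"
    using \<open>ereal t < ereal T\<close> by auto
next
  assume "\<exists>T>t. \<forall>s\<in>S. T \<le> s"
  then obtain T where "t < T" "\<forall>s\<in>S. T \<le> s"
    by blast
  then have "ereal t < ereal T" "ereal T \<le> Inf (ereal ` S)"
    by (auto intro: Inf_greatest)
  then show "ereal t < Inf (ereal ` S)"
    by (rule order.strict_trans2)
qed

lemma continuous_on_pos_if_nonzero:
  fixes f :: "real \<Rightarrow> real"
  assumes f: "continuous_on {a..b} f" and "0 < f a" and nz: "\<And>s. s \<in> {a..b} \<Longrightarrow> f s \<noteq> 0"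
    and s: "s \<in> {a..b}"
  shows "0 < f s"
proof (rule ccontr)
  assume "\<not> 0 < f s"
  moreover have "continuous_on {a..s} f"
    using f by (rule continuous_on_subset) (use s in auto)
  ultimately obtain r where "a \<le> r" "r \<le> s" "f r = 0"
    using IVT2'[of f s 0 a] \<open>0 < f a\<close> s by auto
  then show False
    using nz[of r] s by auto
qed

lemma compact_pos_ge_inverse_Suc:
  fixes f :: "'a::topological_space \<Rightarrow> real"
  assumes "compact S" "continuous_on S f" "\<And>s. s \<in> S \<Longrightarrow> 0 < f s"
  shows "\<exists>k. \<forall>s\<in>S. 1 / real (Suc k) \<le> f s"
proof (cases "S = {}")
  case False
  then obtain z where "z \<in> S" and min: "\<And>s. s \<in> S \<Longrightarrow> f z \<le> f s"
    using continuous_attains_inf[OF assms(1) _ assms(2)] by blast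
  obtain k where "inverse (real (Suc k)) < f z"
    using reals_Archimedean assms(3)[OF \<open>z \<in> S\<close>] by blast
  then show ?thesis
    using min by (metis inverse_eq_divide less_imp_le order.trans)
qed simp

lemma inverse_Suc_le_imp_pos:
  fixes a :: real
  assumes "1 / real (Suc k) \<le> a"
  shows "0 < a"
proof -
  have "0 < 1 / real (Suc k)"
    by (simp del: of_nat_Suc)
  with assms show ?thesis
    by linarith
qed

lemma inverse_le_Suc_if_inverse_Suc_le:
  fixes a :: real
  assumes "1 / real (Suc k) \<le> a"
  shows "1 / a \<le> real (Suc k)"
proof -
  have "1 / a \<le> 1 / (1 / real (Suc k))"
    using assms inverse_Suc_le_imp_pos[OF assms] by (intro divide_left_mono) auto
  then show ?thesis
    by simp
qed

lemma measure_tendsto_0_if_eventually_notin: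
  assumes "finite_measure M" and F: "\<And>n. F n \<in> sets M"
    and ev: "\<And>\<omega>. \<omega> \<in> space M \<Longrightarrow> eventually (\<lambda>n. \<omega> \<notin> F n) sequentially"
  shows "(\<lambda>n. measure M (F n)) \<longlonglongrightarrow> 0"
proof -
  interpret finite_measure M by fact
  have "(\<lambda>n. integral\<^sup>L M (indicator (F n) :: 'a \<Rightarrow> real)) \<longlonglongrightarrow> integral\<^sup>L M (\<lambda>_. 0)"
  proof (rule integral_dominated_convergence[where w="\<lambda>_. 1"])
    show "AE \<omega> in M. (\<lambda>n. indicator (F n) \<omega> :: real) \<longlonglongrightarrow> 0"
    proof (rule AE_I2)
      fix \<omega> assume "\<omega> \<in> space M"
      have "eventually (\<lambda>n. indicator (F n) \<omega> = (0::real)) sequentially"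
        using ev[OF \<open>\<omega> \<in> space M\<close>] by (rule eventually_mono) simp
      then show "(\<lambda>n. indicator (F n) \<omega> :: real) \<longlonglongrightarrow> 0"
        by (rule tendsto_eventually)
    qed
  qed (use F in auto)
  then show ?thesis
    using F by (simp add: Int_absorb2 sets.sets_into_space)
qed

lemma measure_tendsto_0_localize:
  assumes "finite_measure M" and sets: "\<And>n. E n \<in> sets M" "\<And>K. B K \<in> sets M" "A \<in> sets M"
    and inside: "\<And>K. (\<lambda>n. measure M (B K \<inter> E n)) \<longlonglongrightarrow> 0"
    and outside: "(\<lambda>K. measure M (A - B K)) \<longlonglongrightarrow> 0"
  shows "(\<lambda>n. measure M (A \<inter> E n)) \<longlonglongrightarrow> 0"
proof (rule tendstoI)
  interpret finite_measure M by fact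
  fix \<eta> :: real assume "0 < \<eta>"
  obtain K where K: "measure M (A - B K) < \<eta> / 2"
    using order_tendstoD(2)[OF outside, of "\<eta> / 2"] \<open>0 < \<eta>\<close> by (auto simp: eventually_sequentially)
  have "eventually (\<lambda>n. measure M (B K \<inter> E n) < \<eta> / 2) sequentially"
    using order_tendstoD(2)[OF inside, of "\<eta> / 2"] \<open>0 < \<eta>\<close> by simp
  then show "eventually (\<lambda>n. dist (measure M (A \<inter> E n)) 0 < \<eta>) sequentially"
  proof eventually_elim
    case (elim n)
    have "A \<inter> E n \<subseteq> (B K \<inter> E n) \<union> (A - B K)"
      by blast
    then have "measure M (A \<inter> E n) \<le> measure M (B K \<inter> E n) + measure M (A - B K)"
      using sets by (intro order_trans[OF finite_measure_mono measure_Un_le]) auto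
    then show ?case
      using elim K by simp
  qed
qed

lemma measure_tendsto_0_if_eventually_subset_Un:
  assumes "finite_measure M" and sets: "\<And>n. F n \<in> sets M" "\<And>n. V n \<in> sets M"
    and F: "(\<lambda>n. measure M (F n)) \<longlonglongrightarrow> 0" and V: "(\<lambda>n. measure M (V n)) \<longlonglongrightarrow> 0"
    and subset: "eventually (\<lambda>n. E n \<subseteq> F n \<union> V n) sequentially"
  shows "(\<lambda>n. measure M (E n)) \<longlonglongrightarrow> 0"
proof (rule tendsto_sandwich[OF _ _ tendsto_const])
  interpret finite_measure M by fact
  show "(\<lambda>n. measure M (F n) + measure M (V n)) \<longlonglongrightarrow> 0"
    using tendsto_add[OF F V] by simp
  show "eventually (\<lambda>n. measure M (E n) \<le> measure M (F n) + measure M (V n)) sequentially"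
    using subset by (rule eventually_mono) (use sets in \<open>intro order_trans[OF finite_measure_mono measure_Un_le] sets.Un\<close>)
qed simp

lemma sets_Collect_continuous_ge:
  fixes f :: "real \<Rightarrow> 'a \<Rightarrow> real"
  assumes "0 \<le> T" and [measurable]: "\<And>s. f s \<in> borel_measurable M"
    and cont: "\<And>\<omega>. \<omega> \<in> space M \<Longrightarrow> continuous_on {0..T} (\<lambda>s. f s \<omega>)"
  shows "{\<omega>\<in>space M. \<forall>s\<in>{0..T}. c \<le> f s \<omega>} \<in> sets M"
proof -
  define Q where "Q = insert 0 ({0<..<T} \<inter> \<rat>)"
  have "closure Q = {0..T}"
  proof (cases "T = 0")
    case False
    then have "closure ({0<..<T} \<inter> \<rat>) = closure {0<..<T}"
      by (intro closure_open_Int_superset) (auto simp: Rats_closure_real)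
    also have "\<dots> = {0..T}"
      using False \<open>0 \<le> T\<close> by (intro closure_greaterThanLessThan) simp
    finally show ?thesis
      using \<open>0 \<le> T\<close> unfolding Q_def closure_insert by (simp add: insert_absorb)
  qed (simp add: Q_def closure_insert)
  then have "Q \<subseteq> {0..T}"
    using closure_subset by blast
  have "c \<le> f s \<omega>" if "\<omega> \<in> space M" "\<forall>q\<in>Q. c \<le> f q \<omega>" "s \<in> {0..T}" for \<omega> s
  proof (rule continuous_ge_on_closure[of Q "\<lambda>s. f s \<omega>"])
    show "continuous_on (closure Q) (\<lambda>s. f s \<omega>)"
      unfolding \<open>closure Q = {0..T}\<close> using that(1) by (rule cont)
  qed (use that \<open>closure Q = {0..T}\<close> in auto)
  then have "{\<omega>\<in>space M. \<forall>s\<in>{0..T}. c \<le> f s \<omega>} = {\<omega>\<in>space M. \<forall>s\<in>Q. c \<le> f s \<omega>}"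
    using \<open>Q \<subseteq> {0..T}\<close> by blast
  also have "\<dots> = {\<omega>\<in>space M. c \<le> f 0 \<omega> \<and> (\<forall>q. real_of_rat q \<in> {0<..<T} \<longrightarrow> c \<le> f (real_of_rat q) \<omega>)}"
    by (auto simp: Q_def Rats_def)
  also have "\<dots> \<in> sets M"
    by measurable
  finally show ?thesis .
qed

section \<open>Cubic variation of Brownian motion\<close>

definition cubic_variation :: "(real \<Rightarrow> 'a \<Rightarrow> real) \<Rightarrow> real \<Rightarrow> nat \<Rightarrow> 'a \<Rightarrow> real" where
  "cubic_variation W t n \<omega> = (\<Sum>k<n. \<bar>W (grid t n (Suc k)) \<omega> - W (grid t n k) \<omega>\<bar>^3)"

lemma real_mult_cube_div_tendsto_0: "(\<lambda>n. real n * (t / real n)^3) \<longlonglongrightarrow> 0"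
proof -
  have "real n * (t / real n)^3 = t^3 * (inverse (real n))^2" for n
    by (cases "n = 0") (simp_all add: field_simps power3_eq_cube power2_eq_square)
  moreover have "(\<lambda>n. t^3 * (inverse (real n))^2) \<longlonglongrightarrow> t^3 * 0^2"
    by (intro tendsto_intros lim_inverse_n)
  ultimately show ?thesis
    by simp
qed

lemma brownian_motionD:
  assumes "brownian_motion M W"
  shows "prob_space M" and "\<And>s. W s \<in> borel_measurable M"
    and "\<And>\<omega>. \<omega> \<in> space M \<Longrightarrow> W 0 \<omega> = 0"
    and "\<And>\<omega>. \<omega> \<in> space M \<Longrightarrow> continuous_on {0..} (\<lambda>s. W s \<omega>)"
    and "\<And>a b. 0 \<le> a \<Longrightarrow> a < b \<Longrightarrow>
      distributed M lborel (\<lambda>\<omega>. W b \<omega> - W a \<omega>) (normal_density 0 (sqrt (b - a)))"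
  using assms unfolding brownian_motion_def by auto

lemma brownian_increment_abs_cube:
  assumes "brownian_motion M W" "0 \<le> a" "a < b"
  shows "integrable M (\<lambda>\<omega>. \<bar>W b \<omega> - W a \<omega>\<bar>^3)"
    and "(\<integral>\<omega>. \<bar>W b \<omega> - W a \<omega>\<bar>^3 \<partial>M) = 2 * sqrt (2 / pi) * sqrt (b - a)^3"
proof -
  note distr = brownian_motionD(5)[OF assms]
  have "0 < sqrt (b - a)"
    using assms by simp
  from integrable_normal_moment_abs[OF this, of 0 3] distributed_integrable[OF distr, of "\<lambda>x. \<bar>x\<bar>^3"]
  show "integrable M (\<lambda>\<omega>. \<bar>W b \<omega> - W a \<omega>\<bar>^3)"
    by simp
  from integral_normal_moment_abs_odd[OF \<open>0 < sqrt (b - a)\<close>, of 0 1] distributed_integral[OF distr, of "\<lambda>x. \<bar>x\<bar>^3"]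
  show "(\<integral>\<omega>. \<bar>W b \<omega> - W a \<omega>\<bar>^3 \<partial>M) = 2 * sqrt (2 / pi) * sqrt (b - a)^3"
    by simp
qed

lemma measure_cubic_variation_ge_le:
  assumes bm: "brownian_motion M W" and "0 < t" "0 < \<delta>" "0 < n"
  shows "measure M {\<omega>\<in>space M. \<delta> \<le> cubic_variation W t n \<omega>} \<le> 2 * sqrt (2 / pi) * t / \<delta> * sqrt (t / real n)"
proof -
  interpret prob_space M
    using brownian_motionD(1)[OF bm] .
  define h where "h = t / real n"
  have "0 < h"
    using assms by (simp add: h_def)
  have "0 \<le> grid t n k" "grid t n k < grid t n (Suc k)" for k
    using \<open>0 < t\<close> \<open>0 < h\<close> by (simp add: grid_def, simp add: grid_Suc h_def[symmetric])
  note moment = brownian_increment_abs_cube[OF bm this]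
  have "integrable M (cubic_variation W t n)"
    unfolding cubic_variation_def by (intro Bochner_Integration.integrable_sum moment(1))
  moreover have "AE \<omega> in M. 0 \<le> cubic_variation W t n \<omega>"
    by (intro AE_I2) (simp add: cubic_variation_def sum_nonneg)
  ultimately have "measure M {\<omega>\<in>space M. \<delta> \<le> cubic_variation W t n \<omega>}
      \<le> (\<integral>\<omega>. cubic_variation W t n \<omega> \<partial>M) / \<delta>"
    using integral_Markov_inequality_measure[OF _ sets.top _ \<open>0 < \<delta>\<close>] by blast
  also have "(\<integral>\<omega>. cubic_variation W t n \<omega> \<partial>M) = 2 * sqrt (2 / pi) * (real n * h) * sqrt h"
  proof -
    have "sqrt h ^ 3 = h * sqrt h"
      using \<open>0 < h\<close> by (simp add: power3_eq_cube)
    then show ?thesis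
      unfolding cubic_variation_def using moment by (simp add: grid_Suc h_def[symmetric])
  qed
  also have "real n * h = t"
    using \<open>0 < n\<close> by (simp add: h_def)
  finally show ?thesis
    by (simp add: h_def)
qed

lemma measure_cubic_variation_ge_tendsto_0:
  assumes bm: "brownian_motion M W" and "0 \<le> t" "0 < \<delta>"
  shows "(\<lambda>n. measure M {\<omega>\<in>space M. \<delta> \<le> cubic_variation W t n \<omega>}) \<longlonglongrightarrow> 0"
proof (cases "t = 0")
  case True
  then show ?thesis
    using \<open>0 < \<delta>\<close> by (simp add: cubic_variation_def grid_def)
next
  case False
  with \<open>0 \<le> t\<close> have "0 < t"
    by simp
  have lim: "(\<lambda>n. 2 * sqrt (2 / pi) * t / \<delta> * sqrt (t / real n)) \<longlonglongrightarrow> 0"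
  proof (rule tendsto_mult_right_zero)
    show "(\<lambda>n. sqrt (t / real n)) \<longlonglongrightarrow> 0"
      using tendsto_real_sqrt[OF lim_const_over_n[of t]] by simp
  qed
  show ?thesis
  proof (rule tendsto_sandwich[OF _ _ tendsto_const lim])
    show "eventually (\<lambda>n. 0 \<le> measure M {\<omega>\<in>space M. \<delta> \<le> cubic_variation W t n \<omega>}) sequentially"
      by simp
    show "eventually (\<lambda>n. measure M {\<omega>\<in>space M. \<delta> \<le> cubic_variation W t n \<omega>}
        \<le> 2 * sqrt (2 / pi) * t / \<delta> * sqrt (t / real n)) sequentially"
      using eventually_gt_at_top[of 0]
      by (rule eventually_mono) (rule measure_cubic_variation_ge_le[OF bm \<open>0 < t\<close> \<open>0 < \<delta>\<close>])
  qed
qed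

section \<open>The explicit solution and the stopping time\<close>

definition lwr_denom :: "(real \<Rightarrow> 'a \<Rightarrow> real) \<Rightarrow> real \<Rightarrow> 'a \<Rightarrow> real" where
  "lwr_denom W s \<omega> = 1 + 2 * s + 2 * W s \<omega>"

definition lwr_integrand :: "(real \<Rightarrow> 'a \<Rightarrow> real) \<Rightarrow> real \<Rightarrow> real \<Rightarrow> 'a \<Rightarrow> real" where
  "lwr_integrand W x s \<omega> = (1 - 2 * x) / (lwr_denom W s \<omega>)^2"

lemma lwr_u_eq: "lwr_denom W s \<omega> \<noteq> 0 \<Longrightarrow> lwr_u W x s \<omega> = 1 / 2 + (1 / 2 - x) / lwr_denom W s \<omega>"
  unfolding lwr_u_def lwr_denom_def by (simp add: field_simps)

lemma deriv_lwr_u: "deriv (\<lambda>y. lwr_u W y s \<omega>) x = - 1 / lwr_denom W s \<omega>"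
proof (rule DERIV_imp_deriv)
  show "((\<lambda>y. lwr_u W y s \<omega>) has_real_derivative - 1 / lwr_denom W s \<omega>) (at x)"
    unfolding lwr_u_def lwr_denom_def by (rule DERIV_cdivide) (auto intro!: derivative_eq_intros)
qed

lemma lwr_integrand_eq:
  "(1 - 2 * lwr_u W x s \<omega>) * deriv (\<lambda>y. lwr_u W y s \<omega>) x = lwr_integrand W x s \<omega>"
proof (cases "lwr_denom W s \<omega> = 0")
  case False
  then show ?thesis
    unfolding deriv_lwr_u lwr_u_eq[OF False, of x] lwr_integrand_def
    by (simp add: field_simps power2_eq_square)
qed (simp add: deriv_lwr_u lwr_integrand_def)

lemma lwr_ratio_mem_iff:
  assumes "0 < lwr_denom W s \<omega>"
  shows "(x + s + W s \<omega>) / (1 + 2 * s + 2 * W s \<omega>) \<in> {0..1} \<longleftrightarrow> \<bar>1 - 2 * x\<bar> \<le> lwr_denom W s \<omega>"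
  using assms unfolding lwr_denom_def by (auto simp: divide_le_eq_1 zero_le_divide_iff abs_le_iff)

lemma continuous_on_lwr_denom:
  assumes "continuous_on {0..} (\<lambda>s. W s \<omega>)"
  shows "continuous_on {0..T} (\<lambda>s. lwr_denom W s \<omega>)"
  unfolding lwr_denom_def by (intro continuous_intros continuous_on_subset[OF assms]) auto

lemma ereal_less_lwr_sigma_iff:
  "ereal t < lwr_sigma W x \<omega> \<longleftrightarrow>
    (\<exists>T>t. \<forall>s\<in>{0<..<T}. lwr_denom W s \<omega> \<noteq> 0 \<and> (x + s + W s \<omega>) / (1 + 2 * s + 2 * W s \<omega>) \<in> {0..1})"
  (is "_ \<longleftrightarrow> (\<exists>T>t. \<forall>s\<in>{0<..<T}. ?good s)")
proof -
  have "ereal t < lwr_sigma W x \<omega> \<longleftrightarrow>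
    (\<exists>T>t. \<forall>s. 0 < s \<and> (x + s + W s \<omega>) / (1 + 2 * s + 2 * W s \<omega>) \<notin> {0..1} \<longrightarrow> T \<le> s) \<and>
    (\<exists>T>t. \<forall>s. 0 < s \<and> 1 + 2 * s + 2 * W s \<omega> = 0 \<longrightarrow> T \<le> s)"
    unfolding lwr_sigma_def setcompr_eq_image min_less_iff_conj ereal_less_Inf_image_iff by blast
  also have "\<dots> \<longleftrightarrow> (\<exists>T>t. \<forall>s\<in>{0<..<T}. ?good s)"
  proof safe
    fix T1 T2 assume "t < T1" "t < T2"
      and "\<forall>s. 0 < s \<and> (x + s + W s \<omega>) / (1 + 2 * s + 2 * W s \<omega>) \<notin> {0..1} \<longrightarrow> T1 \<le> s"
      and "\<forall>s. 0 < s \<and> 1 + 2 * s + 2 * W s \<omega> = 0 \<longrightarrow> T2 \<le> s"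
    then show "\<exists>T>t. \<forall>s\<in>{0<..<T}. ?good s"
      by (intro exI[of _ "min T1 T2"]) (auto simp: lwr_denom_def)
  qed (fastforce simp: lwr_denom_def)+
  finally show ?thesis .
qed

lemma lwr_denom_ge_if_less_lwr_sigma:
  assumes W0: "W 0 \<omega> = 0" and W: "continuous_on {0..} (\<lambda>s. W s \<omega>)" and x: "x \<in> {0..1}"
    and less: "ereal t < lwr_sigma W x \<omega>"
  shows "\<exists>j k. \<forall>s\<in>{0..t + 1 / real (Suc j)}. max \<bar>1 - 2 * x\<bar> (1 / real (Suc k)) \<le> lwr_denom W s \<omega>"
proof -
  obtain T where "t < T" and good: "\<And>s. s \<in> {0<..<T} \<Longrightarrow>
      lwr_denom W s \<omega> \<noteq> 0 \<and> (x + s + W s \<omega>) / (1 + 2 * s + 2 * W s \<omega>) \<in> {0..1}"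
    using less unfolding ereal_less_lwr_sigma_iff by blast
  obtain j where j: "inverse (real (Suc j)) < T - t"
    using reals_Archimedean[of "T - t"] \<open>t < T\<close> by auto
  define T' where "T' = t + 1 / real (Suc j)"
  have sub: "s \<in> {0..T'} \<Longrightarrow> s = 0 \<or> s \<in> {0<..<T}" for s
    using j by (auto simp: T'_def inverse_eq_divide)
  have D0: "lwr_denom W 0 \<omega> = 1"
    using W0 by (simp add: lwr_denom_def)
  have D: "continuous_on {0..T'} (\<lambda>s. lwr_denom W s \<omega>)"
    using W by (rule continuous_on_lwr_denom)
  have pos: "0 < lwr_denom W s \<omega>" if "s \<in> {0..T'}" for s
  proof (rule continuous_on_pos_if_nonzero[OF D _ _ that])
    show "lwr_denom W r \<omega> \<noteq> 0" if "r \<in> {0..T'}" for r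
      using sub[OF that] D0 good by auto
  qed (simp add: D0)
  then obtain k where k: "\<forall>s\<in>{0..T'}. 1 / real (Suc k) \<le> lwr_denom W s \<omega>"
    using compact_pos_ge_inverse_Suc[OF compact_Icc D] by blast
  have "\<bar>1 - 2 * x\<bar> \<le> lwr_denom W s \<omega>" if "s \<in> {0..T'}" for s
  proof (cases "s = 0")
    case True
    then show ?thesis
      using D0 x by auto
  next
    case False
    then have "s \<in> {0<..<T}"
      using sub[OF that] by auto
    then show ?thesis
      using good lwr_ratio_mem_iff[OF pos[OF that]] by blast
  qed
  with k show ?thesis
    unfolding T'_def by (intro exI[of _ j] exI[of _ k]) auto
qed

lemma less_lwr_sigma_if_lwr_denom_ge:
  assumes jk: "\<forall>s\<in>{0..t + 1 / real (Suc j)}. max \<bar>1 - 2 * x\<bar> (1 / real (Suc k)) \<le> lwr_denom W s \<omega>"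
  shows "ereal t < lwr_sigma W x \<omega>"
proof -
  have pos: "0 < lwr_denom W s \<omega>" if "s \<in> {0..t + 1 / real (Suc j)}" for s
  proof (rule inverse_Suc_le_imp_pos)
    show "1 / real (Suc k) \<le> lwr_denom W s \<omega>"
      using jk that by auto
  qed
  show ?thesis
    unfolding ereal_less_lwr_sigma_iff
  proof (intro exI conjI ballI)
    show "t < t + 1 / real (Suc j)"
      by simp
    fix s assume "s \<in> {0<..<t + 1 / real (Suc j)}"
    then have s: "s \<in> {0..t + 1 / real (Suc j)}"
      by auto
    show "lwr_denom W s \<omega> \<noteq> 0"
      using pos[OF s] by simp
    show "(x + s + W s \<omega>) / (1 + 2 * s + 2 * W s \<omega>) \<in> {0..1}"
      using lwr_ratio_mem_iff[OF pos[OF s]] jk s by fastforce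
  qed
qed

(* The countable quantifiers make the event {t < sigma} measurable. *)
lemma ereal_less_lwr_sigma_iff_lower_bound:
  assumes "W 0 \<omega> = 0" "continuous_on {0..} (\<lambda>s. W s \<omega>)" "x \<in> {0..1}"
  shows "ereal t < lwr_sigma W x \<omega> \<longleftrightarrow>
    (\<exists>j k. \<forall>s\<in>{0..t + 1 / real (Suc j)}. max \<bar>1 - 2 * x\<bar> (1 / real (Suc k)) \<le> lwr_denom W s \<omega>)"
proof
  assume "ereal t < lwr_sigma W x \<omega>"
  then show "\<exists>j k. \<forall>s\<in>{0..t + 1 / real (Suc j)}. max \<bar>1 - 2 * x\<bar> (1 / real (Suc k)) \<le> lwr_denom W s \<omega>"
    by (rule lwr_denom_ge_if_less_lwr_sigma[of W \<omega> x t, OF assms])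
next
  assume "\<exists>j k. \<forall>s\<in>{0..t + 1 / real (Suc j)}. max \<bar>1 - 2 * x\<bar> (1 / real (Suc k)) \<le> lwr_denom W s \<omega>"
  then obtain j k
    where "\<forall>s\<in>{0..t + 1 / real (Suc j)}. max \<bar>1 - 2 * x\<bar> (1 / real (Suc k)) \<le> lwr_denom W s \<omega>"
    by blast
  then show "ereal t < lwr_sigma W x \<omega>"
    by (rule less_lwr_sigma_if_lwr_denom_ge)
qed

lemma lwr_denom_lower_bound:
  assumes "W 0 \<omega> = 0" "continuous_on {0..} (\<lambda>s. W s \<omega>)" "x \<in> {0..1}"
    and "ereal t < lwr_sigma W x \<omega>"
  shows "\<exists>k. \<forall>s\<in>{0..t}. 1 / real (Suc k) \<le> lwr_denom W s \<omega>"
proof -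
  obtain j k where "\<forall>s\<in>{0..t + 1 / real (Suc j)}. max \<bar>1 - 2 * x\<bar> (1 / real (Suc k)) \<le> lwr_denom W s \<omega>"
    using lwr_denom_ge_if_less_lwr_sigma[of W \<omega> x t, OF assms] by blast
  moreover have "{0..t} \<subseteq> {0..t + 1 / real (Suc j)}"
    by simp
  ultimately have "\<forall>s\<in>{0..t}. 1 / real (Suc k) \<le> lwr_denom W s \<omega>"
    by fastforce
  then show ?thesis ..
qed

section \<open>Stratonovich sums along a path\<close>

lemma strat_sum_lwr_cell:
  fixes x :: real
  assumes "lwr_denom W a \<omega> \<noteq> 0" "lwr_denom W b \<omega> \<noteq> 0" "b = a + h"
  defines "D \<equiv> \<lambda>s. lwr_denom W s \<omega>" and "H \<equiv> \<lambda>s. lwr_integrand W x s \<omega>" and "u \<equiv> \<lambda>s. lwr_u W x s \<omega>"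
  shows "(H a + H b) / 2 * (W b \<omega> - W a \<omega>)
    = (u a - u b) - (H a + H b) / 2 * h + (1 - 2 * x) / 2 * ((D b - D a)^3 / (2 * (D a)^2 * (D b)^2))"
proof -
  have "D a \<noteq> 0" "D b \<noteq> 0"
    using assms by (simp_all add: D_def)
  have dW: "W b \<omega> - W a \<omega> = (D b - D a) / 2 - h"
    by (simp add: D_def lwr_denom_def \<open>b = a + h\<close> field_simps)
  have "(H a + H b) / 2 * ((D b - D a) / 2)
      = (1 - 2 * x) / 2 * ((1 / (D a)^2 + 1 / (D b)^2) / 2 * (D b - D a))"
    by (simp add: H_def D_def lwr_integrand_def field_simps)
  also have "\<dots> = (1 - 2 * x) / 2 * (1 / D a - 1 / D b)
      + (1 - 2 * x) / 2 * ((D b - D a)^3 / (2 * (D a)^2 * (D b)^2))"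
    unfolding trapezoid_inverse_square[OF \<open>D a \<noteq> 0\<close> \<open>D b \<noteq> 0\<close>] by (rule distrib_left)
  also have "(1 - 2 * x) / 2 * (1 / D a - 1 / D b) = u a - u b"
    using \<open>D a \<noteq> 0\<close> \<open>D b \<noteq> 0\<close> by (simp add: u_def D_def lwr_u_eq field_simps)
  finally show ?thesis
    unfolding dW right_diff_distrib by linarith
qed

lemma strat_sum_lwr_integrand_eq:
  assumes W0: "W 0 \<omega> = 0" and "0 < n"
    and nz: "\<And>k. k \<le> n \<Longrightarrow> lwr_denom W (grid t n k) \<omega> \<noteq> 0"
  defines "D \<equiv> \<lambda>k. lwr_denom W (grid t n k) \<omega>"
  shows "strat_sum W (lwr_integrand W x) t n \<omega>
    = 1 - x - lwr_u W x t \<omega> - trapezoid_sum (\<lambda>s. lwr_integrand W x s \<omega>) t n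
      + (1 - 2 * x) / 2 * (\<Sum>k<n. (D (Suc k) - D k)^3 / (2 * (D k)^2 * (D (Suc k))^2))"
proof -
  define u where "u k = lwr_u W x (grid t n k) \<omega>" for k
  define H where "H k = lwr_integrand W x (grid t n k) \<omega>" for k
  have cell: "(H k + H (Suc k)) / 2 * (W (grid t n (Suc k)) \<omega> - W (grid t n k) \<omega>)
      = (u k - u (Suc k)) - (H k + H (Suc k)) / 2 * (t / real n)
        + (1 - 2 * x) / 2 * ((D (Suc k) - D k)^3 / (2 * (D k)^2 * (D (Suc k))^2))"
    if "k < n" for k
    unfolding u_def H_def D_def using nz[of k] nz[of "Suc k"] that
    by (intro strat_sum_lwr_cell) (simp_all add: grid_Suc)
  have "strat_sum W (lwr_integrand W x) t n \<omega>
      = (\<Sum>k<n. (H k + H (Suc k)) / 2 * (W (grid t n (Suc k)) \<omega> - W (grid t n k) \<omega>))"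
    by (simp add: strat_sum_def H_def grid_def)
  also have "\<dots> = (\<Sum>k<n. (u k - u (Suc k)) - (H k + H (Suc k)) / 2 * (t / real n)
        + (1 - 2 * x) / 2 * ((D (Suc k) - D k)^3 / (2 * (D k)^2 * (D (Suc k))^2)))"
    by (intro sum.cong refl cell) simp
  also have "\<dots> = (\<Sum>k<n. u k - u (Suc k)) - trapezoid_sum (\<lambda>s. lwr_integrand W x s \<omega>) t n
      + (1 - 2 * x) / 2 * (\<Sum>k<n. (D (Suc k) - D k)^3 / (2 * (D k)^2 * (D (Suc k))^2))"
    by (simp only: sum.distrib sum_subtractf sum_distrib_left trapezoid_sum_def H_def)
  also have "(\<Sum>k<n. u k - u (Suc k)) = 1 - x - lwr_u W x t \<omega>"
    using sum_lessThan_telescope'[of u n] W0 \<open>0 < n\<close> by (simp add: u_def lwr_u_def)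
  finally show ?thesis .
qed

lemma abs_add_cube_le:
  fixes a b :: real
  shows "\<bar>a + b\<bar>^3 \<le> 4 * (\<bar>a\<bar>^3 + \<bar>b\<bar>^3)"
proof -
  have "\<bar>a + b\<bar>^3 \<le> (\<bar>a\<bar> + \<bar>b\<bar>)^3"
    by (intro power_mono) auto
  also have "\<dots> = 4 * (\<bar>a\<bar>^3 + \<bar>b\<bar>^3) - 3 * (\<bar>a\<bar> + \<bar>b\<bar>) * (\<bar>a\<bar> - \<bar>b\<bar>)^2"
    by (simp add: power2_eq_square power3_eq_cube algebra_simps)
  also have "\<dots> \<le> 4 * (\<bar>a\<bar>^3 + \<bar>b\<bar>^3)"
    by simp
  finally show ?thesis .
qed

lemma abs_cube_div_sq_sq_le:
  fixes a b h w m :: real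
  assumes "0 < a" "0 < b" "1 / a \<le> m" "1 / b \<le> m" "0 \<le> h" and diff: "b - a = 2 * (h + w)"
  shows "\<bar>(b - a)^3 / (2 * a^2 * b^2)\<bar> \<le> 16 * m^4 * (h^3 + \<bar>w\<bar>^3)"
proof -
  have "\<bar>(b - a)^3 / (2 * a^2 * b^2)\<bar> = 4 * \<bar>h + w\<bar>^3 * ((1 / a)^2 * (1 / b)^2)"
    unfolding diff power_mult_distrib abs_divide abs_mult power_abs by (simp add: power_one_over)
  also have "\<dots> \<le> 4 * (4 * (h^3 + \<bar>w\<bar>^3)) * (m^2 * m^2)"
    using abs_add_cube_le[of h w] assms by (intro mult_mono power_mono) auto
  finally show ?thesis
    by (simp add: power_add[symmetric] algebra_simps)
qed

lemma strat_sum_lwr_integrand_approx: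
  assumes W0: "W 0 \<omega> = 0" and "0 < n" "0 \<le> t"
    and lower: "\<forall>s\<in>{0..t}. 1 / real (Suc K) \<le> lwr_denom W s \<omega>"
  shows "\<bar>strat_sum W (lwr_integrand W x) t n \<omega>
      - (1 - x - lwr_u W x t \<omega> - trapezoid_sum (\<lambda>s. lwr_integrand W x s \<omega>) t n)\<bar>
    \<le> 8 * \<bar>1 - 2 * x\<bar> * real (Suc K)^4 * (real n * (t / real n)^3 + cubic_variation W t n \<omega>)"
proof -
  define D where "D k = lwr_denom W (grid t n k) \<omega>" for k
  define w where "w k = W (grid t n (Suc k)) \<omega> - W (grid t n k) \<omega>" for k
  define h where "h = t / real n"
  have "0 \<le> h"
    using \<open>0 \<le> t\<close> by (simp add: h_def)
  have lower_D: "1 / real (Suc K) \<le> D k" if "k \<le> n" for k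
    using lower grid_mem[OF \<open>0 \<le> t\<close> that] by (simp add: D_def)
  have cell: "\<bar>(D (Suc k) - D k)^3 / (2 * (D k)^2 * (D (Suc k))^2)\<bar>
      \<le> 16 * real (Suc K)^4 * (h^3 + \<bar>w k\<bar>^3)" if "k < n" for k
  proof (rule abs_cube_div_sq_sq_le)
    show "D (Suc k) - D k = 2 * (h + w k)"
      by (simp add: D_def w_def h_def lwr_denom_def grid_Suc algebra_simps)
  qed (use inverse_Suc_le_imp_pos[OF lower_D] inverse_le_Suc_if_inverse_Suc_le[OF lower_D] that \<open>0 \<le> h\<close>
      in auto)
  have "\<bar>strat_sum W (lwr_integrand W x) t n \<omega>
      - (1 - x - lwr_u W x t \<omega> - trapezoid_sum (\<lambda>s. lwr_integrand W x s \<omega>) t n)\<bar>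
      = \<bar>1 - 2 * x\<bar> / 2 * \<bar>\<Sum>k<n. (D (Suc k) - D k)^3 / (2 * (D k)^2 * (D (Suc k))^2)\<bar>"
  proof -
    have "lwr_denom W (grid t n k) \<omega> \<noteq> 0" if "k \<le> n" for k
      using inverse_Suc_le_imp_pos[OF lower_D[OF that]] by (simp add: D_def)
    then show ?thesis
      using strat_sum_lwr_integrand_eq[where W=W and \<omega>=\<omega> and x=x and t=t and n=n, OF W0 \<open>0 < n\<close>] by (simp add: D_def abs_mult)
  qed
  also have "\<dots> \<le> \<bar>1 - 2 * x\<bar> / 2 * (\<Sum>k<n. 16 * real (Suc K)^4 * (h^3 + \<bar>w k\<bar>^3))"
    by (intro mult_left_mono order_trans[OF sum_abs] sum_mono cell) auto
  also have "\<dots> = 8 * \<bar>1 - 2 * x\<bar> * real (Suc K)^4 * (real n * h^3 + cubic_variation W t n \<omega>)"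
    by (simp add: cubic_variation_def w_def sum.distrib sum_distrib_left algebra_simps)
  finally show ?thesis
    by (simp add: h_def)
qed

(* The limit of the trapezoidal sums rather than the integral itself, so that it is measurable
   in omega; the two agree before sigma. *)
definition lwr_time_integral :: "(real \<Rightarrow> 'a \<Rightarrow> real) \<Rightarrow> real \<Rightarrow> real \<Rightarrow> 'a \<Rightarrow> real" where
  "lwr_time_integral W x t \<omega> = lim (\<lambda>n. trapezoid_sum (\<lambda>s. lwr_integrand W x s \<omega>) t n)"

(* Defined through the equation it has to satisfy; the content is that it is the limit in
   probability of the Stratonovich sums (stratonovich_on_lwr_strat_integral). *)
definition lwr_strat_integral :: "(real \<Rightarrow> 'a \<Rightarrow> real) \<Rightarrow> real \<Rightarrow> real \<Rightarrow> 'a \<Rightarrow> real" where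
  "lwr_strat_integral W x t \<omega> = 1 - x - lwr_time_integral W x t \<omega> - lwr_u W x t \<omega>"

lemma trapezoid_sum_lwr_integrand_tendsto:
  assumes "continuous_on {0..} (\<lambda>s. W s \<omega>)" "0 \<le> t" "\<forall>s\<in>{0..t}. lwr_denom W s \<omega> \<noteq> 0"
  shows "(\<lambda>n. trapezoid_sum (\<lambda>s. lwr_integrand W x s \<omega>) t n) \<longlonglongrightarrow> integral {0..t} (\<lambda>s. lwr_integrand W x s \<omega>)"
  using assms unfolding lwr_integrand_def
  by (intro trapezoid_sum_tendsto_integral continuous_intros continuous_on_lwr_denom) auto

lemma lwr_time_integral_eq:
  assumes "continuous_on {0..} (\<lambda>s. W s \<omega>)" "0 \<le> t" "\<forall>s\<in>{0..t}. lwr_denom W s \<omega> \<noteq> 0"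
  shows "lwr_time_integral W x t \<omega> = integral {0..t} (\<lambda>s. lwr_integrand W x s \<omega>)"
  unfolding lwr_time_integral_def using trapezoid_sum_lwr_integrand_tendsto[OF assms] by (rule limI)

lemma lwr_u_integral_equation:
  assumes "W 0 \<omega> = 0" "continuous_on {0..} (\<lambda>s. W s \<omega>)" "x \<in> {0..1}" "0 \<le> t"
    and "ereal t < lwr_sigma W x \<omega>"
  shows "lwr_u W x t \<omega> = 1 - x - integral {0..t} (\<lambda>s. lwr_integrand W x s \<omega>) - lwr_strat_integral W x t \<omega>"
proof -
  obtain K where "\<forall>s\<in>{0..t}. 1 / real (Suc K) \<le> lwr_denom W s \<omega>"
    using lwr_denom_lower_bound[of W \<omega> x t, OF assms(1-3,5)] ..
  then have "\<forall>s\<in>{0..t}. lwr_denom W s \<omega> \<noteq> 0"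
    by (auto dest: inverse_Suc_le_imp_pos)
  then show ?thesis
    using lwr_time_integral_eq[of W \<omega> t x, OF assms(2,4)] by (simp add: lwr_strat_integral_def)
qed

lemma abs_strat_sum_sub_lwr_strat_integral_less:
  fixes K :: nat and x :: real
  defines "c \<equiv> 8 * \<bar>1 - 2 * x\<bar> * real (Suc K)^4"
  assumes "W 0 \<omega> = 0" "0 < n" "0 \<le> t" "\<forall>s\<in>{0..t}. 1 / real (Suc K) \<le> lwr_denom W s \<omega>"
    and "\<bar>lwr_time_integral W x t \<omega> - trapezoid_sum (\<lambda>s. lwr_integrand W x s \<omega>) t n\<bar> < \<epsilon> / 2"
    and "c * (real n * (t / real n)^3) < \<epsilon> / 4"
    and "cubic_variation W t n \<omega> < \<epsilon> / (4 * (c + 1))"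
  shows "\<bar>strat_sum W (lwr_integrand W x) t n \<omega> - lwr_strat_integral W x t \<omega>\<bar> < \<epsilon>"
proof -
  have "0 \<le> c"
    by (simp add: c_def)
  have "0 < \<epsilon> / 2"
    using order.strict_trans1[OF abs_ge_zero assms(6)] .
  then have "0 < \<epsilon>"
    by simp
  have "c * cubic_variation W t n \<omega> \<le> c * (\<epsilon> / (4 * (c + 1)))"
    using \<open>0 \<le> c\<close> assms(8) by (intro mult_left_mono) simp_all
  also have "\<dots> \<le> \<epsilon> / 4"
    using \<open>0 \<le> c\<close> \<open>0 < \<epsilon>\<close> by (simp add: field_simps)
  finally show ?thesis
    using strat_sum_lwr_integrand_approx[OF assms(2-5), of x] assms(6,7)
    unfolding c_def lwr_strat_integral_def distrib_left by linarith
qed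

section \<open>Convergence in probability\<close>

lemma borel_measurable_lwr_time_integral:
  assumes [measurable]: "\<And>s. W s \<in> borel_measurable M"
  shows "lwr_time_integral W x t \<in> borel_measurable M"
  unfolding lwr_time_integral_def trapezoid_sum_def lwr_integrand_def lwr_denom_def by measurable

lemma borel_measurable_lwr_strat_integral:
  assumes [measurable]: "\<And>s. W s \<in> borel_measurable M"
  shows "lwr_strat_integral W x t \<in> borel_measurable M"
  unfolding lwr_strat_integral_def lwr_u_def
  using borel_measurable_lwr_time_integral[OF assms] by measurable

lemma sets_lwr_denom_ge:
  assumes "brownian_motion M W" "0 \<le> T"
  shows "{\<omega>\<in>space M. \<forall>s\<in>{0..T}. c \<le> lwr_denom W s \<omega>} \<in> sets M"
proof (rule sets_Collect_continuous_ge[OF \<open>0 \<le> T\<close>])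
  show "(\<lambda>\<omega>. lwr_denom W s \<omega>) \<in> borel_measurable M" for s
    using brownian_motionD(2)[OF assms(1)] unfolding lwr_denom_def by measurable
  show "continuous_on {0..T} (\<lambda>s. lwr_denom W s \<omega>)" if "\<omega> \<in> space M" for \<omega>
    using brownian_motionD(4)[OF assms(1) that] by (rule continuous_on_lwr_denom)
qed

lemma sets_lwr_before_sigma:
  assumes bm: "brownian_motion M W" and "x \<in> {0..1}" "0 \<le> t"
  shows "{\<omega>\<in>space M. ereal t < lwr_sigma W x \<omega>} \<in> sets M"
proof -
  have "{\<omega>\<in>space M. ereal t < lwr_sigma W x \<omega>} = (\<Union>j. \<Union>k.
      {\<omega>\<in>space M. \<forall>s\<in>{0..t + 1 / real (Suc j)}. max \<bar>1 - 2 * x\<bar> (1 / real (Suc k)) \<le> lwr_denom W s \<omega>})"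
  proof -
    have "ereal t < lwr_sigma W x \<omega> \<longleftrightarrow> (\<exists>j k. \<forall>s\<in>{0..t + 1 / real (Suc j)}.
        max \<bar>1 - 2 * x\<bar> (1 / real (Suc k)) \<le> lwr_denom W s \<omega>)" if "\<omega> \<in> space M" for \<omega>
      using brownian_motionD(3,4)[OF bm that] assms(2) by (rule ereal_less_lwr_sigma_iff_lower_bound)
    then show ?thesis
      by auto
  qed
  also have "\<dots> \<in> sets M"
    using \<open>0 \<le> t\<close> by (intro sets.countable_UN image_subsetI sets_lwr_denom_ge[OF bm]) simp
  finally show ?thesis .
qed

lemma measure_lwr_trapezoid_deviation_tendsto_0:
  fixes K :: nat
  assumes bm: "brownian_motion M W" and "0 \<le> t" "0 < \<eta>"
  defines "B \<equiv> {\<omega>\<in>space M. \<forall>s\<in>{0..t}. 1 / real (Suc K) \<le> lwr_denom W s \<omega>}"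
  shows "(\<lambda>n. measure M (B \<inter> {\<omega>\<in>space M.
    \<eta> \<le> \<bar>lwr_time_integral W x t \<omega> - trapezoid_sum (\<lambda>s. lwr_integrand W x s \<omega>) t n\<bar>})) \<longlonglongrightarrow> 0"
proof (rule measure_tendsto_0_if_eventually_notin)
  show "finite_measure M"
    using brownian_motionD(1)[OF bm] by (rule prob_space.finite_measure)
  note [measurable] = brownian_motionD(2)[OF bm]
  have [measurable]: "B \<in> sets M"
    unfolding B_def using bm \<open>0 \<le> t\<close> by (rule sets_lwr_denom_ge)
  have [measurable]: "lwr_time_integral W x t \<in> borel_measurable M"
    by (rule borel_measurable_lwr_time_integral) measurable
  show "B \<inter> {\<omega>\<in>space M. \<eta> \<le> \<bar>lwr_time_integral W x t \<omega> - trapezoid_sum (\<lambda>s. lwr_integrand W x s \<omega>) t n\<bar>}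
      \<in> sets M" for n
    unfolding trapezoid_sum_def lwr_integrand_def lwr_denom_def by measurable
  fix \<omega> assume \<omega>: "\<omega> \<in> space M"
  show "eventually (\<lambda>n. \<omega> \<notin> B \<inter> {\<omega>\<in>space M.
      \<eta> \<le> \<bar>lwr_time_integral W x t \<omega> - trapezoid_sum (\<lambda>s. lwr_integrand W x s \<omega>) t n\<bar>}) sequentially"
  proof (cases "\<omega> \<in> B")
    case True
    then have "\<forall>s\<in>{0..t}. lwr_denom W s \<omega> \<noteq> 0"
      by (auto simp: B_def dest: inverse_Suc_le_imp_pos)
    with brownian_motionD(4)[OF bm \<omega>] \<open>0 \<le> t\<close>
    have "(\<lambda>n. trapezoid_sum (\<lambda>s. lwr_integrand W x s \<omega>) t n) \<longlonglongrightarrow> lwr_time_integral W x t \<omega>"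
      by (simp add: trapezoid_sum_lwr_integrand_tendsto lwr_time_integral_eq)
    then have "eventually (\<lambda>n. dist (trapezoid_sum (\<lambda>s. lwr_integrand W x s \<omega>) t n)
        (lwr_time_integral W x t \<omega>) < \<eta>) sequentially"
      by (rule tendstoD) (simp add: \<open>0 < \<eta>\<close>)
    then show ?thesis
      by (rule eventually_mono) (simp add: dist_real_def abs_minus_commute)
  qed simp
qed

lemma measure_strat_sum_deviation_bounded_tendsto_0:
  fixes K :: nat
  assumes bm: "brownian_motion M W" and "0 \<le> t" "0 < \<epsilon>"
  defines "B \<equiv> {\<omega>\<in>space M. \<forall>s\<in>{0..t}. 1 / real (Suc K) \<le> lwr_denom W s \<omega>}"
  shows "(\<lambda>n. measure M (B \<inter> {\<omega>\<in>space M.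
    \<epsilon> < \<bar>strat_sum W (lwr_integrand W x) t n \<omega> - lwr_strat_integral W x t \<omega>\<bar>})) \<longlonglongrightarrow> 0"
proof -
  interpret prob_space M
    using brownian_motionD(1)[OF bm] .
  note [measurable] = brownian_motionD(2)[OF bm] borel_measurable_lwr_time_integral[OF brownian_motionD(2)[OF bm]]
  define c where "c = 8 * \<bar>1 - 2 * x\<bar> * real (Suc K)^4"
  define F where "F n = B \<inter> {\<omega>\<in>space M.
    \<epsilon> / 2 \<le> \<bar>lwr_time_integral W x t \<omega> - trapezoid_sum (\<lambda>s. lwr_integrand W x s \<omega>) t n\<bar>}" for n
  define V where "V n = {\<omega>\<in>space M. \<epsilon> / (4 * (c + 1)) \<le> cubic_variation W t n \<omega>}" for n
  have [measurable]: "B \<in> sets M"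
    unfolding B_def using bm \<open>0 \<le> t\<close> by (rule sets_lwr_denom_ge)
  have "eventually (\<lambda>n. c * (real n * (t / real n)^3) < \<epsilon> / 4) sequentially"
    using tendsto_mult_right_zero[OF real_mult_cube_div_tendsto_0]
    by (rule order_tendstoD(2)) (simp add: \<open>0 < \<epsilon>\<close>)
  then have "eventually (\<lambda>n. B \<inter> {\<omega>\<in>space M.
      \<epsilon> < \<bar>strat_sum W (lwr_integrand W x) t n \<omega> - lwr_strat_integral W x t \<omega>\<bar>} \<subseteq> F n \<union> V n) sequentially"
    using eventually_gt_at_top[of 0]
  proof eventually_elim
    case (elim n)
    show ?case
    proof (intro subsetI, rule ccontr)
      fix \<omega> assume "\<omega> \<in> B \<inter> {\<omega>\<in>space M.
        \<epsilon> < \<bar>strat_sum W (lwr_integrand W x) t n \<omega> - lwr_strat_integral W x t \<omega>\<bar>}" "\<omega> \<notin> F n \<union> V n"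
      then show False
        using abs_strat_sum_sub_lwr_strat_integral_less[of W \<omega> n t K x \<epsilon>] brownian_motionD(3)[OF bm] elim \<open>0 \<le> t\<close>
        by (auto simp: F_def V_def B_def c_def not_le)
    qed
  qed
  then show ?thesis
  proof (rule measure_tendsto_0_if_eventually_subset_Un[rotated 5])
    show "F n \<in> sets M" "V n \<in> sets M" for n
      unfolding F_def V_def cubic_variation_def trapezoid_sum_def lwr_integrand_def lwr_denom_def
      by measurable
    show "(\<lambda>n. measure M (F n)) \<longlonglongrightarrow> 0"
      unfolding F_def B_def using bm \<open>0 \<le> t\<close> by (rule measure_lwr_trapezoid_deviation_tendsto_0) (simp add: \<open>0 < \<epsilon>\<close>)
    have "0 \<le> c"
      by (simp add: c_def)
    with \<open>0 < \<epsilon>\<close> have "0 < \<epsilon> / (4 * (c + 1))"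
      by simp
    with bm \<open>0 \<le> t\<close> show "(\<lambda>n. measure M (V n)) \<longlonglongrightarrow> 0"
      unfolding V_def by (rule measure_cubic_variation_ge_tendsto_0)
  qed simp
qed

lemma measure_before_lwr_sigma_diff_tendsto_0:
  assumes bm: "brownian_motion M W" and x: "x \<in> {0..1}" and "0 \<le> t"
  shows "(\<lambda>K. measure M ({\<omega>\<in>space M. ereal t < lwr_sigma W x \<omega>}
      - {\<omega>\<in>space M. \<forall>s\<in>{0..t}. 1 / real (Suc K) \<le> lwr_denom W s \<omega>})) \<longlonglongrightarrow> 0"
proof (rule measure_tendsto_0_if_eventually_notin)
  show "finite_measure M"
    using brownian_motionD(1)[OF bm] by (rule prob_space.finite_measure)
  show "{\<omega>\<in>space M. ereal t < lwr_sigma W x \<omega>}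
      - {\<omega>\<in>space M. \<forall>s\<in>{0..t}. 1 / real (Suc K) \<le> lwr_denom W s \<omega>} \<in> sets M" for K
    using sets_lwr_before_sigma[OF bm x \<open>0 \<le> t\<close>] sets_lwr_denom_ge[OF bm \<open>0 \<le> t\<close>] by blast
  fix \<omega> assume \<omega>: "\<omega> \<in> space M"
  show "eventually (\<lambda>K. \<omega> \<notin> {\<omega>\<in>space M. ereal t < lwr_sigma W x \<omega>}
      - {\<omega>\<in>space M. \<forall>s\<in>{0..t}. 1 / real (Suc K) \<le> lwr_denom W s \<omega>}) sequentially"
  proof (cases "ereal t < lwr_sigma W x \<omega>")
    case True
    then obtain K0 where K0: "\<forall>s\<in>{0..t}. 1 / real (Suc K0) \<le> lwr_denom W s \<omega>"
      using lwr_denom_lower_bound[of W \<omega> x t, OF brownian_motionD(3,4)[OF bm \<omega>] x] by blast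
    have "\<forall>s\<in>{0..t}. 1 / real (Suc K) \<le> lwr_denom W s \<omega>" if "K0 \<le> K" for K
      using K0 that by (auto intro: order_trans[rotated] simp: frac_le)
    then show ?thesis
      by (auto simp: eventually_sequentially)
  qed simp
qed

lemma stratonovich_on_lwr_strat_integral:
  assumes bm: "brownian_motion M W" and x: "x \<in> {0..1}" and "0 \<le> t"
  shows "stratonovich_on M W (lwr_integrand W x) t {\<omega>\<in>space M. ereal t < lwr_sigma W x \<omega>}
    (lwr_strat_integral W x t)"
proof -
  interpret prob_space M
    using brownian_motionD(1)[OF bm] .
  note [measurable] = brownian_motionD(2)[OF bm] borel_measurable_lwr_strat_integral[OF brownian_motionD(2)[OF bm]]
  define A where "A = {\<omega>\<in>space M. ereal t < lwr_sigma W x \<omega>}"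
  define B where "B K = {\<omega>\<in>space M. \<forall>s\<in>{0..t}. 1 / real (Suc K) \<le> lwr_denom W s \<omega>}" for K
  have [measurable]: "A \<in> sets M" "B K \<in> sets M" for K
    unfolding A_def B_def using sets_lwr_before_sigma[OF bm x \<open>0 \<le> t\<close>] sets_lwr_denom_ge[OF bm \<open>0 \<le> t\<close>] by auto
  show ?thesis
    unfolding stratonovich_on_def A_def[symmetric]
  proof (intro allI impI conjI)
    fix \<epsilon> :: real assume "0 < \<epsilon>"
    define E where "E n = {\<omega>\<in>space M. \<epsilon> < \<bar>strat_sum W (lwr_integrand W x) t n \<omega> - lwr_strat_integral W x t \<omega>\<bar>}" for n
    have [measurable]: "E n \<in> sets M" for n
      unfolding E_def strat_sum_def lwr_integrand_def lwr_denom_def by measurable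
    have eq: "{\<omega>\<in>space M. \<omega> \<in> A \<and> \<epsilon> < \<bar>strat_sum W (lwr_integrand W x) t n \<omega> - lwr_strat_integral W x t \<omega>\<bar>}
        = A \<inter> E n" for n
      by (auto simp: E_def)
    show "{\<omega>\<in>space M. \<omega> \<in> A \<and> \<epsilon> < \<bar>strat_sum W (lwr_integrand W x) t n \<omega> - lwr_strat_integral W x t \<omega>\<bar>}
        \<in> sets M" for n
      unfolding eq by measurable
    have "(\<lambda>n. measure M (A \<inter> E n)) \<longlonglongrightarrow> 0"
    proof (rule measure_tendsto_0_localize[where B=B])
      show "(\<lambda>n. measure M (B K \<inter> E n)) \<longlonglongrightarrow> 0" for K
        unfolding B_def E_def using bm \<open>0 \<le> t\<close> \<open>0 < \<epsilon>\<close> by (rule measure_strat_sum_deviation_bounded_tendsto_0)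
      show "(\<lambda>K. measure M (A - B K)) \<longlonglongrightarrow> 0"
        unfolding A_def B_def using bm x \<open>0 \<le> t\<close> by (rule measure_before_lwr_sigma_diff_tendsto_0)
    qed simp_all
    then show "(\<lambda>n. measure M {\<omega>\<in>space M. \<omega> \<in> A \<and>
        \<epsilon> < \<bar>strat_sum W (lwr_integrand W x) t n \<omega> - lwr_strat_integral W x t \<omega>\<bar>}) \<longlonglongrightarrow> 0"
      unfolding eq .
  qed
qed

theorem mainTheorem1:
  fixes M :: "'a measure" and W :: "real \<Rightarrow> 'a \<Rightarrow> real"
  assumes "brownian_motion M W"
  shows "\<exists>I :: real \<Rightarrow> real \<Rightarrow> 'a \<Rightarrow> real.
     (\<forall>x\<in>{0..1}. \<forall>t\<ge>0.
        stratonovich_on M W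
          (\<lambda>s \<omega>. (1 - 2 * lwr_u W x s \<omega>) * deriv (\<lambda>y. lwr_u W y s \<omega>) x)
          t {\<omega> \<in> space M. ereal t < lwr_sigma W x \<omega>} (I x t)) \<and>
     (AE \<omega> in M.
        (\<forall>x\<in>{0..1}. lwr_u W x 0 \<omega> = 1 - x) \<and>
        (\<forall>x\<in>{0..1}. \<forall>t\<ge>0. ereal t < lwr_sigma W x \<omega> \<longrightarrow>
           lwr_u W x t \<omega> = 1 - x
             - integral {0..t} (\<lambda>s. (1 - 2 * lwr_u W x s \<omega>) * deriv (\<lambda>y. lwr_u W y s \<omega>) x)
             - I x t \<omega>))"
  unfolding lwr_integrand_eq
proof (intro exI[of _ "lwr_strat_integral W"] conjI ballI allI impI AE_I2)
  fix x t :: real assume "x \<in> {0..1}" "0 \<le> t"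
  then show "stratonovich_on M W (lwr_integrand W x) t {\<omega>\<in>space M. ereal t < lwr_sigma W x \<omega>}
      (lwr_strat_integral W x t)"
    using assms by (intro stratonovich_on_lwr_strat_integral)
next
  fix \<omega> x assume "\<omega> \<in> space M"
  then show "lwr_u W x 0 \<omega> = 1 - x"
    using brownian_motionD(3)[OF assms] by (simp add: lwr_u_def)
next
  fix \<omega> x t assume \<omega>: "\<omega> \<in> space M" and "x \<in> {0..1}" "0 \<le> t" "ereal t < lwr_sigma W x \<omega>"
  then show "lwr_u W x t \<omega> = 1 - x - integral {0..t} (\<lambda>s. lwr_integrand W x s \<omega>) - lwr_strat_integral W x t \<omega>"
    by (intro lwr_u_integral_equation[of W \<omega> x t] brownian_motionD(3,4)[OF assms \<omega>])
qed

end
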